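(* For every integer $x\geq 3$ and each $i\in[1,8]$, there exists a $D_i$-decomposition of $K^*_{(2x+1)\times 7}$.
   Context: For a simple graph $G$, $G^*$ is the digraph with vertex set $V(G)$ and arc set $\bigcup_{\{x,y\}\in E(G)}\{(x,y),(y,x)\}$. $K_{r\times s}$ is the complete multipartite simple graph with $r$ parts each of size $s$, and $K^*_{r\times s}=(K_{r\times s})^*$. A $D$-decomposition of a digraph $K$ is a set of subdigraphs of $K$, each isomorphic to $D$, such that every arc of $K$ lies in exactly one of them. For distinct vertices $v_0,\dots,v_6$, the digraphs $D_i[v_0,v_1,\dots,v_6]$ ($i\in[1,8]$) all have vertex set $\{v_0,\dots,v_6\}$ and the following arc sets: $D_1$: $(v_1,v_0),(v_1,v_2),(v_2,v_3),(v_3,v_4),(v_4,v_5),(v_5,v_6),(v_6,v_0)$; $D_2$: $(v_1,v_0),(v_2,v_1),(v_2,v_3),(v_3,v_4),(v_4,v_5),(v_5,v_6),(v_6,v_0)$; $D_3$: $(v_1,v_0),(v_1,v_2),(v_3,v_2),(v_3,v_4),(v_4,v_5),(v_5,v_6),(v_6,v_0)$; $D_4$: $(v_1,v_0),(v_1,v_2),(v_2,v_3),(v_4,v_3),(v_4,v_5),(v_5,v_6),(v_6,v_0)$; $D_5$: $(v_1,v_0),(v_2,v_1),(v_3,v_2),(v_3,v_4),(v_4,v_5),(v_5,v_6),(v_6,v_0)$; $D_6$: $(v_1,v_0),(v_2,v_1),(v_2,v_3),(v_3,v_4),(v_5,v_4),(v_5,v_6),(v_6,v_0)$; $D_7$: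 $(v_1,v_0),(v_1,v_2),(v_3,v_2),(v_3,v_4),(v_4,v_5),(v_6,v_5),(v_6,v_0)$; $D_8$: $(v_1,v_0),(v_2,v_1),(v_2,v_3),(v_4,v_3),(v_4,v_5),(v_5,v_6),(v_6,v_0)$. $D_i$ also denotes the isomorphism type of $D_i[v_0,\dots,v_6]$. *)

theory Defs
  imports Main
begin

type_synonym 'a digraph = "'a set \<times> ('a \<times> 'a) set"

definition verts :: "'a digraph \<Rightarrow> 'a set" where "verts G = fst G"
definition arcs :: "'a digraph \<Rightarrow> ('a \<times> 'a) set" where "arcs G = snd G"

text \<open>Symmetric digraph G* of the complete multipartite graph K_{r x s}:
  vertices (p,j) with part p < r and index j < s; arcs between vertices in different parts.\<close>
definition Kstar :: "nat \<Rightarrow> nat \<Rightarrow> (nat \<times> nat) digraph" where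
  "Kstar r s = ({0..<r} \<times> {0..<s},
     {(u, w). u \<in> {0..<r} \<times> {0..<s} \<and> w \<in> {0..<r} \<times> {0..<s} \<and> fst u \<noteq> fst w})"

text \<open>Arc patterns of D_1..D_8, as index pairs (a,b) meaning arc (v_a, v_b).\<close>
fun D_pattern :: "nat \<Rightarrow> (nat \<times> nat) list" where
  "D_pattern (Suc 0) = [(1,0),(1,2),(2,3),(3,4),(4,5),(5,6),(6,0)]"
| "D_pattern (Suc (Suc 0)) = [(1,0),(2,1),(2,3),(3,4),(4,5),(5,6),(6,0)]"
| "D_pattern (Suc (Suc (Suc 0))) = [(1,0),(1,2),(3,2),(3,4),(4,5),(5,6),(6,0)]"
| "D_pattern (Suc (Suc (Suc (Suc 0)))) = [(1,0),(1,2),(2,3),(4,3),(4,5),(5,6),(6,0)]"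
| "D_pattern (Suc (Suc (Suc (Suc (Suc 0))))) = [(1,0),(2,1),(3,2),(3,4),(4,5),(5,6),(6,0)]"
| "D_pattern (Suc (Suc (Suc (Suc (Suc (Suc 0)))))) = [(1,0),(2,1),(2,3),(3,4),(5,4),(5,6),(6,0)]"
| "D_pattern (Suc (Suc (Suc (Suc (Suc (Suc (Suc 0))))))) = [(1,0),(1,2),(3,2),(3,4),(4,5),(6,5),(6,0)]"
| "D_pattern (Suc (Suc (Suc (Suc (Suc (Suc (Suc (Suc 0)))))))) = [(1,0),(2,1),(2,3),(4,3),(4,5),(5,6),(6,0)]"
| "D_pattern _ = []"

text \<open>D_i[v_0,...,v_6] for a vertex assignment v (intended injective on {0..6}).\<close>
definition Dig :: "nat \<Rightarrow> (nat \<Rightarrow> 'a) \<Rightarrow> 'a digraph" where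
  "Dig i v = (v ` {0..6}, (\<lambda>(a, b). (v a, v b)) ` set (D_pattern i))"

definition digraph_iso :: "'a digraph \<Rightarrow> 'b digraph \<Rightarrow> bool" where
  "digraph_iso G H \<longleftrightarrow> (\<exists>f. bij_betw f (verts G) (verts H) \<and>
     (\<forall>x\<in>verts G. \<forall>y\<in>verts G. (x, y) \<in> arcs G \<longleftrightarrow> (f x, f y) \<in> arcs H))"

definition subdigraph :: "'a digraph \<Rightarrow> 'a digraph \<Rightarrow> bool" where
  "subdigraph H G \<longleftrightarrow> verts H \<subseteq> verts G \<and> arcs H \<subseteq> arcs G \<and>
     arcs H \<subseteq> verts H \<times> verts H"

definition is_decomposition :: "'b digraph \<Rightarrow> 'a digraph \<Rightarrow> 'a digraph set \<Rightarrow> bool" where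
  "is_decomposition D K \<D> \<longleftrightarrow>
     (\<forall>H\<in>\<D>. subdigraph H K \<and> digraph_iso H D) \<and>
     (\<forall>e\<in>arcs K. \<exists>!H. H \<in> \<D> \<and> e \<in> arcs H)"

end

theory Submission
  imports Defs "HOL-Number_Theory.Cong"
begin

text \<open>
  Identify the parts of \<open>K*\<close> with the residues modulo \<open>m = 2x + 1\<close> and the vertices of a
  part with the residues modulo 7. The base block places \<open>v\<^sub>k\<close> at
  \<open>(part_label k, index_label k)\<close>; over its seven arcs the fourteen signed differences
  \<open>\<plusminus>(part_label b - part_label a, index_label b - index_label a mod 7)\<close> are exactly
  \<open>(\<plusminus>1, E)\<close> for \<open>E \<noteq> 0\<close> and \<open>(\<plusminus>2, 0)\<close>. A block scales the part coordinate by
  \<open>t \<in> {1..x}\<close>, multiplies by a sign \<open>e\<close> and translates. Since \<open>\<plusminus>t\<close> and \<open>\<plusminus>2t\<close> each run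
  exactly once through the nonzero residues modulo the odd number \<open>m\<close>, every difference
  \<open>(d, E)\<close> with \<open>d \<noteq> 0\<close> comes from exactly one arc, sign and scale, so every arc of \<open>K*\<close>
  lies in exactly one block.
\<close>

lemma dvd_abs_less_imp_eq_0:
  fixes m z :: int
  assumes "m dvd z" "\<bar>z\<bar> < m"
  shows "z = 0"
  using assms dvd_imp_le_int[of z m] by linarith

lemma cong_diff_iff_cong:
  fixes a b c d m :: int
  assumes "[a = c] (mod m)"
  shows "[b = d] (mod m) \<longleftrightarrow> [b - a = d - c] (mod m)"
proof -
  have "b - d = ((b - a) - (d - c)) + (a - c)"
    by simp
  moreover have "m dvd (a - c)"
    using assms by (simp add: cong_iff_dvd_diff)
  ultimately show ?thesis
    by (metis cong_iff_dvd_diff dvd_add_left_iff)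
qed

lemma signed_mult_cong_imp_eq:
  fixes x s s' t t' :: int
  assumes "s \<in> {1, -1}" "s' \<in> {1, -1}" "t \<in> {1..x}" "t' \<in> {1..x}"
    and "[s * t = s' * t'] (mod 2 * x + 1)"
  shows "s = s' \<and> t = t'"
proof -
  have "(2 * x + 1) dvd (s * t - s' * t')"
    using assms(5) by (simp add: cong_iff_dvd_diff)
  moreover have "\<bar>s * t - s' * t'\<bar> < 2 * x + 1"
    using assms(1-4) by auto
  ultimately have "s * t - s' * t' = 0"
    by (rule dvd_abs_less_imp_eq_0)
  then show ?thesis
    using assms(1-4) by auto
qed

lemma signed_mult_not_cong_0:
  fixes x c s t :: int
  assumes "coprime c (2 * x + 1)" "s \<in> {1, -1}" "t \<in> {1..x}"
  shows "\<not> [c * (s * t) = 0] (mod 2 * x + 1)"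
proof
  assume "[c * (s * t) = 0] (mod 2 * x + 1)"
  then have "(2 * x + 1) dvd (s * t)"
    using cong_mult_lcancel[OF assms(1), of "s * t" 0] by (simp add: cong_0_iff)
  moreover have "\<bar>s * t\<bar> < 2 * x + 1"
    using assms(2,3) by auto
  ultimately have "s * t = 0"
    by (rule dvd_abs_less_imp_eq_0)
  with assms(2,3) show False
    by auto
qed

definition base_diffs :: "(int \<times> int) set" where
  "base_diffs = {1, -1} \<times> {1..6} \<union> {2, -2} \<times> {0}"

lemma base_diffsE:
  assumes "(\<delta>, E) \<in> base_diffs"
  obtains s where "s \<in> {1, -1}" "\<delta> = (if E = 0 then 2 else 1) * s" "E \<in> {0..6}"
  using assms unfolding base_diffs_def by force

lemma card_base_diffs: "card base_diffs = 14"
  by (simp add: base_diffs_def card_Un_disjoint card_cartesian_product)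

definition scaled_diff :: "int \<Rightarrow> (int \<times> int) \<times> int \<Rightarrow> int \<times> int" where
  "scaled_diff m = (\<lambda>((\<delta>, E), t). (\<delta> * t mod m, E))"

lemma inj_on_scaled_diff:
  fixes x :: int
  shows "inj_on (scaled_diff (2 * x + 1)) (base_diffs \<times> {1..x})"
proof (rule inj_onI, clarify)
  let ?m = "2 * x + 1"
  \<comment> \<open>In \<open>base_diffs\<close> the size \<open>\<bar>\<delta>\<bar>\<close> is determined by \<open>E\<close>, and it is a unit modulo \<open>?m\<close>.\<close>
  let ?c = "\<lambda>E :: int. if E = 0 then 2 else 1 :: int"
  fix \<delta> E t \<delta>' E' t'
  assume eq: "scaled_diff ?m ((\<delta>, E), t) = scaled_diff ?m ((\<delta>', E'), t')"
    and "(\<delta>, E) \<in> base_diffs" "t \<in> {1..x}" "(\<delta>', E') \<in> base_diffs" "t' \<in> {1..x}"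
  from eq have E: "E' = E" and cong: "[\<delta> * t = \<delta>' * t'] (mod ?m)"
    by (simp_all add: scaled_diff_def cong_def)
  obtain s where s: "s \<in> {1, -1}" "\<delta> = ?c E * s"
    using \<open>(\<delta>, E) \<in> base_diffs\<close> by (rule base_diffsE)
  obtain s' where s': "s' \<in> {1, -1}" "\<delta>' = ?c E * s'"
    using \<open>(\<delta>', E') \<in> base_diffs\<close> E by (auto elim: base_diffsE)
  have "[?c E * (s * t) = ?c E * (s' * t')] (mod ?m)"
    using cong s s' by (simp add: mult.assoc)
  moreover have "coprime (?c E) ?m"
    by simp
  ultimately have "[s * t = s' * t'] (mod ?m)"
    by (simp add: cong_mult_lcancel)
  with s s' \<open>t \<in> {1..x}\<close> \<open>t' \<in> {1..x}\<close> have "s = s' \<and> t = t'"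
    using signed_mult_cong_imp_eq by blast
  with s s' E show "(\<delta>, E) = (\<delta>', E') \<and> t = t'"
    by simp
qed

lemma scaled_diff_in_range:
  fixes x :: int
  assumes "(\<delta>, E) \<in> base_diffs" "t \<in> {1..x}"
  shows "scaled_diff (2 * x + 1) ((\<delta>, E), t) \<in> {1..2 * x} \<times> {0..6}"
proof -
  let ?m = "2 * x + 1"
  obtain s where s: "s \<in> {1, -1}" "\<delta> = (if E = 0 then 2 else 1) * s" and "E \<in> {0..6}"
    using assms(1) by (rule base_diffsE)
  have "coprime (if E = 0 then 2 else 1 :: int) ?m"
    by simp
  from signed_mult_not_cong_0[OF this s(1) assms(2)] have "\<delta> * t mod ?m \<noteq> 0"
    using s(2) by (simp add: cong_0_iff dvd_eq_mod_eq_0 mult.assoc)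
  moreover have "0 < ?m"
    using assms(2) by simp
  ultimately have "\<delta> * t mod ?m \<in> {1..2 * x}"
    using pos_mod_sign[of ?m "\<delta> * t"] pos_mod_bound[of ?m "\<delta> * t"]
    unfolding atLeastAtMost_iff by linarith
  with \<open>E \<in> {0..6}\<close> show ?thesis
    by (simp add: scaled_diff_def)
qed

lemma bij_betw_scaled_diff:
  fixes x :: int
  shows "bij_betw (scaled_diff (2 * x + 1)) (base_diffs \<times> {1..x}) ({1..2 * x} \<times> {0..6})"
proof -
  have "scaled_diff (2 * x + 1) ` (base_diffs \<times> {1..x}) \<subseteq> {1..2 * x} \<times> {0..6}"
    by (intro image_subsetI) (auto intro: scaled_diff_in_range)
  moreover have "card (base_diffs \<times> {1..x}) = card ({1..2 * x} \<times> {0..6 :: int})"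
    by (simp add: card_cartesian_product card_base_diffs nat_mult_distrib)
  ultimately have "scaled_diff (2 * x + 1) ` (base_diffs \<times> {1..x}) = {1..2 * x} \<times> {0..6}"
    by (intro card_subset_eq) (simp_all add: card_image[OF inj_on_scaled_diff])
  with inj_on_scaled_diff show ?thesis
    by (rule bij_betw_imageI)
qed

definition part_label :: "nat \<Rightarrow> int" where
  "part_label k = [0, 2, 3, 2, 3, 2, 1] ! k"

definition index_label :: "nat \<Rightarrow> int" where
  "index_label k = [0, 0, 1, 3, 2, 5, 2] ! k"

lemma index_label_range:
  assumes "k \<le> 6"
  shows "index_label k \<in> {0..6}"
proof -
  have "k \<in> {0, 1, 2, 3, 4, 5, 6}"
    using assms by auto
  then show ?thesis
    by (auto simp: index_label_def)
qed

lemma index_label_eq_imp_part_label_diff: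
  assumes "a \<le> 6" "b \<le> 6" "a \<noteq> b" "index_label a = index_label b"
  shows "part_label a - part_label b \<in> {2, -2}"
proof -
  have "a \<in> {0, 1, 2, 3, 4, 5, 6}" "b \<in> {0, 1, 2, 3, 4, 5, 6}"
    using assms(1,2) by auto
  then show ?thesis
    using assms(3,4) by (auto simp: index_label_def part_label_def)
qed

definition base_diff :: "(nat \<times> nat) \<times> int \<Rightarrow> int \<times> int" where
  "base_diff = (\<lambda>((a, b), e). (e * (part_label b - part_label a),
                               e * (index_label b - index_label a) mod 7))"

text \<open>One labelling serves all eight \<open>D\<^sub>i\<close>: they are orientations of the same cycle
  \<open>v\<^sub>0 v\<^sub>1 \<dots> v\<^sub>6 v\<^sub>0\<close>, and reversing an arc only exchanges the signs \<open>e = 1\<close> and \<open>e = -1\<close>.\<close>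

lemma bij_betw_base_diff_D_pattern:
  assumes "i \<in> {1..8}"
  shows "bij_betw base_diff (set (D_pattern i) \<times> {1, -1}) base_diffs"
proof -
  have "i \<in> {1, 2, 3, 4, 5, 6, 7, 8}"
    using assms by auto
  then show ?thesis
    by (auto simp: bij_betw_def inj_on_def base_diff_def base_diffs_def part_label_def
        index_label_def numeral_eq_Suc)
qed

definition place :: "int \<Rightarrow> int \<Rightarrow> int \<Rightarrow> int \<Rightarrow> int \<Rightarrow> nat \<Rightarrow> nat \<times> nat" where
  "place m t e p0 j0 k =
     (nat ((p0 + e * t * part_label k) mod m), nat ((j0 + e * index_label k) mod 7))"

lemma place_eq_iff:
  assumes "0 < m"
  shows "place m t e p0 j0 a = place m t' e' p0' j0' b \<longleftrightarrow>
    [p0 + e * t * part_label a = p0' + e' * t' * part_label b] (mod m) \<and>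
    [j0 + e * index_label a = j0' + e' * index_label b] (mod 7)"
  using assms by (simp add: place_def cong_def eq_nat_nat_iff)

lemma place_eq_Pair_iff:
  assumes "0 < m" "int q < m" "l < 7"
  shows "place m t e p0 j0 k = (q, l) \<longleftrightarrow>
    [p0 + e * t * part_label k = int q] (mod m) \<and> [j0 + e * index_label k = int l] (mod 7)"
  using assms by (auto simp: place_def cong_def nat_eq_iff)

lemma place_in_range:
  assumes "0 < r"
  shows "place (int r) t e p0 j0 k \<in> {0..<r} \<times> {0..<7}"
  using assms by (simp add: place_def nat_less_iff)

lemma inj_on_place:
  fixes x t e :: int
  assumes t: "t \<in> {1..x}" and e: "e \<in> {1, -1}"
  shows "inj_on (place (2 * x + 1) t e p0 j0) {0..6}"
proof (rule inj_onI, rule ccontr)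
  let ?m = "2 * x + 1"
  fix a b
  assume "a \<in> {0..6}" "b \<in> {0..6}" "a \<noteq> b"
    and "place ?m t e p0 j0 a = place ?m t e p0 j0 b"
  then have part: "[e * t * part_label a = e * t * part_label b] (mod ?m)"
    and "[e * index_label a = e * index_label b] (mod 7)"
    using t by (simp_all add: place_eq_iff cong_add_lcancel)
  then have "[index_label a = index_label b] (mod 7)"
    using e by (auto simp: cong_minus_minus_iff)
  moreover have "index_label a \<in> {0..6}" "index_label b \<in> {0..6}"
    using index_label_range \<open>a \<in> {0..6}\<close> \<open>b \<in> {0..6}\<close> by auto
  ultimately have "index_label a = index_label b"
    by (intro cong_less_imp_eq_int) auto
  with \<open>a \<in> {0..6}\<close> \<open>b \<in> {0..6}\<close> \<open>a \<noteq> b\<close>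
  have "part_label a - part_label b \<in> {2, -2}"
    by (intro index_label_eq_imp_part_label_diff) auto
  then obtain s where s: "s \<in> {1, -1}" "part_label a - part_label b = 2 * s"
    by (auto intro: that[of 1] that[of "-1"])
  from part have "[2 * ((e * s) * t) = 0] (mod ?m)"
    by (simp add: cong_iff_dvd_diff right_diff_distrib[symmetric] s(2) ac_simps)
  moreover have "e * s \<in> {1, -1}"
    using e s(1) by auto
  ultimately show False
    using signed_mult_not_cong_0[of 2 x "e * s", OF _ _ t] by simp
qed

definition arc_diff :: "int \<Rightarrow> ((nat \<times> nat) \<times> int) \<times> int \<Rightarrow> int \<times> int" where
  "arc_diff m = scaled_diff m \<circ> map_prod base_diff id"

lemma bij_betw_arc_diff:
  fixes x :: int
  assumes "bij_betw base_diff A base_diffs"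
  shows "bij_betw (arc_diff (2 * x + 1)) (A \<times> {1..x}) ({1..2 * x} \<times> {0..6})"
  unfolding arc_diff_def
  using bij_betw_map_prod[OF assms bij_betw_id] bij_betw_scaled_diff by (rule bij_betw_trans)

lemma place_target_iff_arc_diff:
  assumes "0 < m" "place m t e p0 j0 a = (p, j)" "int q < m" "l < 7"
  shows "place m t e p0 j0 b = (q, l) \<longleftrightarrow>
    arc_diff m (((a, b), e), t) = ((int q - int p) mod m, (int l - int j) mod 7)"
proof -
  have p: "[p0 + e * t * part_label a = int p] (mod m)"
    and j: "[j0 + e * index_label a = int j] (mod 7)"
    using assms(1,2) by (auto simp: place_def cong_def)
  have "place m t e p0 j0 b = (q, l) \<longleftrightarrow>
      [p0 + e * t * part_label b = int q] (mod m) \<and> [j0 + e * index_label b = int l] (mod 7)"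
    using assms(1,3,4) by (rule place_eq_Pair_iff)
  also have "\<dots> \<longleftrightarrow> [e * t * part_label b - e * t * part_label a = int q - int p] (mod m) \<and>
      [e * index_label b - e * index_label a = int l - int j] (mod 7)"
    using cong_diff_iff_cong[OF p, of "p0 + e * t * part_label b" "int q"]
      cong_diff_iff_cong[OF j, of "j0 + e * index_label b" "int l"] by simp
  also have "\<dots> \<longleftrightarrow> arc_diff m (((a, b), e), t) = ((int q - int p) mod m, (int l - int j) mod 7)"
    by (simp add: arc_diff_def scaled_diff_def base_diff_def cong_def algebra_simps)
  finally show ?thesis .
qed

lemma place_eq_place_if_eq_at:
  assumes "0 < m" "place m t e p0 j0 a = place m t e p0' j0' a"
  shows "place m t e p0 j0 = place m t e p0' j0'"
proof
  fix k
  from assms have "[p0 = p0'] (mod m)" "[j0 = j0'] (mod 7)"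
    by (simp_all add: place_eq_iff cong_add_rcancel)
  with assms(1) show "place m t e p0 j0 k = place m t e p0' j0' k"
    by (simp add: place_eq_iff cong_add_rcancel)
qed

lemma verts_Dig: "verts (Dig i v) = v ` {0..6}"
  by (simp add: Dig_def verts_def)

lemma arcs_Dig: "arcs (Dig i v) = (\<lambda>(a, b). (v a, v b)) ` set (D_pattern i)"
  by (simp add: Dig_def arcs_def)

lemma verts_Kstar: "verts (Kstar r s) = {0..<r} \<times> {0..<s}"
  by (simp add: Kstar_def verts_def)

lemma arcs_Kstar:
  "arcs (Kstar r s) = {(u, w). u \<in> {0..<r} \<times> {0..<s} \<and> w \<in> {0..<r} \<times> {0..<s} \<and> fst u \<noteq> fst w}"
  by (simp add: Kstar_def arcs_def)

lemma D_pattern_arc_le_6: "(a, b) \<in> set (D_pattern i) \<Longrightarrow> a \<le> 6 \<and> b \<le> 6"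
  by (cases i rule: D_pattern.cases) auto

lemma digraph_iso_Dig_id:
  assumes "inj_on v {0..6}"
  shows "digraph_iso (Dig i v) (Dig i id)"
proof -
  let ?f = "the_inv_into {0..6} v"
  have f: "?f (v a) = a" if "a \<in> {0..6}" for a
    using the_inv_into_f_f[OF assms that] .
  have arc_iff: "(v a, v b) \<in> arcs (Dig i v) \<longleftrightarrow> (a, b) \<in> set (D_pattern i)"
    if "a \<in> {0..6}" "b \<in> {0..6}" for a b
    using that D_pattern_arc_le_6 by (force simp: arcs_Dig inj_on_eq_iff[OF assms])
  have "bij_betw ?f (verts (Dig i v)) (verts (Dig i id))"
    using bij_betw_the_inv_into[OF inj_on_imp_bij_betw[OF assms]] by (simp add: verts_Dig)
  moreover have "arcs (Dig i id) = set (D_pattern i)"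
    by (simp add: arcs_Dig case_prod_unfold)
  ultimately show ?thesis
    unfolding digraph_iso_def using f arc_iff by (auto simp: verts_Dig)
qed

definition cyclic_blocks :: "nat \<Rightarrow> nat \<Rightarrow> (nat \<times> nat) digraph set" where
  "cyclic_blocks i x = {Dig i (place (2 * int x + 1) t e p0 j0) | t e p0 j0.
     t \<in> {1..int x} \<and> e \<in> {1, -1}}"

lemma cyclic_block_subdigraph:
  assumes bij: "bij_betw base_diff (set (D_pattern i) \<times> {1, -1}) base_diffs"
    and t: "t \<in> {1..int x}" and e: "e \<in> {1, -1}"
  shows "subdigraph (Dig i (place (2 * int x + 1) t e p0 j0)) (Kstar (2 * x + 1) 7)"
proof -
  let ?m = "2 * int x + 1"
  let ?v = "place ?m t e p0 j0"
  have range: "?v k \<in> {0..<2 * x + 1} \<times> {0..<7}" for k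
    using place_in_range[of "2 * x + 1"] by (simp only: of_nat_add of_nat_mult) simp
  have parts_differ: "fst (?v a) \<noteq> fst (?v b)" if ab: "(a, b) \<in> set (D_pattern i)" for a b
  proof -
    obtain p j q l where v: "?v a = (p, j)" "?v b = (q, l)"
      by force
    with range[of b] have "arc_diff ?m (((a, b), e), t) = ((int q - int p) mod ?m, (int l - int j) mod 7)"
      using place_target_iff_arc_diff[OF _ v(1)] v(2) by auto
    moreover have "arc_diff ?m (((a, b), e), t) \<in> {1..2 * int x} \<times> {0..6}"
      using bij_betw_apply[OF bij_betw_arc_diff[OF bij]] ab t e by auto
    ultimately show ?thesis
      using v by auto
  qed
  show ?thesis
    unfolding subdigraph_def verts_Dig arcs_Dig verts_Kstar arcs_Kstar
  proof (intro conjI)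
    show "?v ` {0..6} \<subseteq> {0..<2 * x + 1} \<times> {0..<7}"
      using range by blast
    show "(\<lambda>(a, b). (?v a, ?v b)) ` set (D_pattern i) \<subseteq>
      {(u, w). u \<in> {0..<2 * x + 1} \<times> {0..<7} \<and> w \<in> {0..<2 * x + 1} \<times> {0..<7} \<and> fst u \<noteq> fst w}"
      using range parts_differ by (simp add: image_subset_iff split_def)
    show "(\<lambda>(a, b). (?v a, ?v b)) ` set (D_pattern i) \<subseteq> ?v ` {0..6} \<times> ?v ` {0..6}"
      using D_pattern_arc_le_6 by fastforce
  qed
qed

lemma arc_in_Dig_place_iff:
  assumes "0 < m" "int q < m" "l < 7"
  shows "((p, j), (q, l)) \<in> arcs (Dig i (place m t e p0 j0)) \<longleftrightarrow>
    (\<exists>a b. (a, b) \<in> set (D_pattern i) \<and> place m t e p0 j0 a = (p, j) \<and>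
       arc_diff m (((a, b), e), t) = ((int q - int p) mod m, (int l - int j) mod 7))"
    (is "_ \<longleftrightarrow> ?rhs")
proof -
  have "((p, j), (q, l)) \<in> arcs (Dig i (place m t e p0 j0)) \<longleftrightarrow>
      (\<exists>a b. (a, b) \<in> set (D_pattern i) \<and> place m t e p0 j0 a = (p, j) \<and>
         place m t e p0 j0 b = (q, l))"
    by (force simp: arcs_Dig)
  also have "\<dots> \<longleftrightarrow> ?rhs"
    using place_target_iff_arc_diff[of m t e p0 j0 _ p j q l] assms by auto
  finally show ?thesis .
qed

lemma Kstar_arc_diff_in_range:
  assumes "((p, j), (q, l)) \<in> arcs (Kstar (2 * x + 1) 7)"
  shows "((int q - int p) mod (2 * int x + 1), (int l - int j) mod 7) \<in> {1..2 * int x} \<times> {0..6}"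
proof -
  let ?m = "2 * int x + 1"
  have "int p < ?m" "int q < ?m" "p \<noteq> q"
    using assms by (auto simp: arcs_Kstar)
  have "[int q - int p \<noteq> 0] (mod ?m)"
  proof
    assume "[int q - int p = 0] (mod ?m)"
    moreover have "\<bar>int q - int p\<bar> < ?m"
      using \<open>int p < ?m\<close> \<open>int q < ?m\<close> by linarith
    ultimately have "int q - int p = 0"
      by (metis cong_0_iff dvd_abs_less_imp_eq_0)
    with \<open>p \<noteq> q\<close> show False
      by simp
  qed
  then have "(int q - int p) mod ?m \<noteq> 0"
    by (simp add: cong_0_iff dvd_eq_mod_eq_0)
  moreover have "0 \<le> (int q - int p) mod ?m" "(int q - int p) mod ?m < ?m"
    "0 \<le> (int l - int j) mod 7" "(int l - int j) mod 7 < 7"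
    by (rule pos_mod_sign pos_mod_bound; simp)+
  ultimately show ?thesis
    unfolding mem_Times_iff atLeastAtMost_iff fst_conv snd_conv by linarith
qed

lemma cyclic_blocks_cover_arc:
  assumes bij: "bij_betw base_diff (set (D_pattern i) \<times> {1, -1}) base_diffs"
    and arc: "((p, j), (q, l)) \<in> arcs (Kstar (2 * x + 1) 7)"
  shows "\<exists>H \<in> cyclic_blocks i x. ((p, j), (q, l)) \<in> arcs H"
proof -
  let ?m = "2 * int x + 1"
  have range: "int p < ?m" "int q < ?m" "j < 7" "l < 7"
    using arc by (auto simp: arcs_Kstar)
  have "((int q - int p) mod ?m, (int l - int j) mod 7) \<in> {1..2 * int x} \<times> {0..6}"
    using arc by (rule Kstar_arc_diff_in_range)
  also have "\<dots> = arc_diff ?m ` ((set (D_pattern i) \<times> {1, -1}) \<times> {1..int x})"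
    using bij_betw_arc_diff[OF bij] by (simp add: bij_betw_def)
  finally obtain a b e t where abet: "(a, b) \<in> set (D_pattern i)" "e \<in> {1, -1}" "t \<in> {1..int x}"
    and d: "arc_diff ?m (((a, b), e), t) = ((int q - int p) mod ?m, (int l - int j) mod 7)"
    by (elim imageE SigmaE) (metis surj_pair)
  define v where "v = place ?m t e (int p - e * t * part_label a) (int j - e * index_label a)"
  have "v a = (p, j)"
    using range by (simp add: v_def place_eq_Pair_iff)
  then have "((p, j), (q, l)) \<in> arcs (Dig i v)"
    unfolding v_def using arc_in_Dig_place_iff[of ?m q l] range abet(1) d by auto
  moreover have "Dig i v \<in> cyclic_blocks i x"
    using abet(2,3) unfolding v_def cyclic_blocks_def by blast
  ultimately show ?thesis
    by blast
qed

lemma cyclic_blocks_arc_unique: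
  assumes bij: "bij_betw base_diff (set (D_pattern i) \<times> {1, -1}) base_diffs"
    and arc: "((p, j), (q, l)) \<in> arcs (Kstar (2 * x + 1) 7)"
    and H: "H \<in> cyclic_blocks i x" "((p, j), (q, l)) \<in> arcs H"
    and H': "H' \<in> cyclic_blocks i x" "((p, j), (q, l)) \<in> arcs H'"
  shows "H = H'"
proof -
  let ?m = "2 * int x + 1"
  have "0 < ?m" "int q < ?m" "l < 7"
    using arc by (auto simp: arcs_Kstar)
  note in_block_iff = arc_in_Dig_place_iff[OF this]
  obtain t e p0 j0 where H_eq: "H = Dig i (place ?m t e p0 j0)"
    and et: "e \<in> {1, -1}" "t \<in> {1..int x}"
    using H(1) unfolding cyclic_blocks_def by blast
  obtain a b where ab: "(a, b) \<in> set (D_pattern i)" and va: "place ?m t e p0 j0 a = (p, j)"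
    and d: "arc_diff ?m (((a, b), e), t) = ((int q - int p) mod ?m, (int l - int j) mod 7)"
    using H(2) unfolding H_eq in_block_iff by blast
  obtain t' e' p0' j0' where H'_eq: "H' = Dig i (place ?m t' e' p0' j0')"
    and et': "e' \<in> {1, -1}" "t' \<in> {1..int x}"
    using H'(1) unfolding cyclic_blocks_def by blast
  obtain a' b' where ab': "(a', b') \<in> set (D_pattern i)" and va': "place ?m t' e' p0' j0' a' = (p, j)"
    and d': "arc_diff ?m (((a', b'), e'), t') = ((int q - int p) mod ?m, (int l - int j) mod 7)"
    using H'(2) unfolding H'_eq in_block_iff by blast
  have same: "(((a', b'), e'), t') = (((a, b), e), t)"
    by (rule inj_onD[OF bij_betw_imp_inj_on[OF bij_betw_arc_diff[OF bij, of "int x"]]])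
      (use d d' ab et ab' et' in auto)
  with va va' have "place ?m t e p0 j0 a = place ?m t e p0' j0' a"
    by simp
  then have "place ?m t e p0 j0 = place ?m t e p0' j0'"
    by (rule place_eq_place_if_eq_at[rotated]) simp
  with H_eq H'_eq same show ?thesis
    by simp
qed

theorem is_decomposition_cyclic_blocks:
  assumes "bij_betw base_diff (set (D_pattern i) \<times> {1, -1}) base_diffs"
  shows "is_decomposition (Dig i (id :: nat \<Rightarrow> nat)) (Kstar (2 * x + 1) 7) (cyclic_blocks i x)"
  unfolding is_decomposition_def
proof (rule conjI; intro ballI)
  fix H
  assume "H \<in> cyclic_blocks i x"
  then obtain t e p0 j0 where H: "H = Dig i (place (2 * int x + 1) t e p0 j0)"
    and t: "t \<in> {1..int x}" and e: "e \<in> {1, -1}"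
    unfolding cyclic_blocks_def by blast
  show "subdigraph H (Kstar (2 * x + 1) 7) \<and> digraph_iso H (Dig i id)"
    using cyclic_block_subdigraph[OF assms t e] digraph_iso_Dig_id[OF inj_on_place[OF t e]]
    by (simp add: H)
next
  fix uw
  assume "uw \<in> arcs (Kstar (2 * x + 1) 7)"
  moreover obtain p j q l where "uw = ((p, j), (q, l))"
    by (metis prod.exhaust)
  ultimately show "\<exists>!H. H \<in> cyclic_blocks i x \<and> uw \<in> arcs H"
    using cyclic_blocks_cover_arc[OF assms] cyclic_blocks_arc_unique[OF assms] by blast
qed

theorem lemma3p4:
  fixes x i :: nat
  assumes "x \<ge> 3" and "i \<in> {1..8}"
  shows "\<exists>\<D>. is_decomposition (Dig i (id :: nat \<Rightarrow> nat)) (Kstar (2 * x + 1) 7) \<D>"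
  using is_decomposition_cyclic_blocks[OF bij_betw_base_diff_D_pattern[OF assms(2)]] by blast

end
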